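(* Let $(G,\sigma)$ be a connection graph with $\sigma$ absolutely inconsistent (i.e. $\mathcal{L}^\sigma$ invertible). Then for any distinct $i,j\in V$, $$\mathcal{R}^\sigma(i,j)=\begin{bmatrix}(\mathcal{C}^\sigma_{ii})^{-1}&0_{d\times d}\\0_{d\times d}&(\mathcal{C}^\sigma_{jj})^{-1}\end{bmatrix}.$$
   Context: A connection graph $(G,\sigma)$: finite connected weighted graph $G=(V,E,W)$, $V=\{1,\dots,n\}$, $w_{xy}>0$ iff $\{x,y\}\in E$, $\deg(x)=\sum_y w_{xy}$, and $\sigma$ mapping oriented edges to $\mathsf{O}(d)$ with $\sigma_{yx}=\sigma_{xy}^{\mathrm T}$. Connection Laplacian $\mathcal{L}=\mathcal{L}^\sigma$: $nd\times nd$ block matrix with blocks $\deg(x)I_d$ on the diagonal, $-w_{xy}\sigma_{xy}$ for $x\sim y$, $0$ otherwise; $\dagger$ = Moore–Penrose pseudoinverse. For $M=\begin{bmatrix}A&B\\C&D\end{bmatrix}$, $M/D=A-BD^\dagger C$. Conductance matrix $\mathcal{C}^\sigma(i,j)=\mathcal{L}/\mathcal{L}_{\{i,j\}^c,\{i,j\}^c}=\begin{bmatrix}\mathcal{C}^\sigma_{ii}&\mathcal{C}^\sigma_{ij}\\ \mathcal{C}^\sigma_{ji}&\mathcal{C}^\sigma_{jj}\end{bmatrix}$ (blocks ordered $i$ then $j$; the diagonal blocks are invertible). $\Omega^0_{ij}=\mathbb{E}[\prod_{\ell=1}^{T^0_j}\sigma_{X_{\ell-1}X_\ell}\mid X_0=i]$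 for the simple random walk $(X_t)$ with transition probabilities $w_{xy}/\deg(x)$ and $T^0_j=\inf\{t\ge0:X_t=j\}$. $\mathcal{W}_{i\to j}=\mathcal{L}^\dagger N_{ij}$, where $N_{ij}$ is the $nd\times d$ block column with $I_d$ at node $i$, $-(\Omega^0_{ij})^{\mathrm T}$ at node $j$, $0$ elsewhere; $\mathcal{W}_{i\to j}(x)$ is its block at $x$. $\mathcal{R}^\sigma(i,j)=\begin{bmatrix}\mathcal{W}_{i\to j}(i)&\mathcal{W}_{j\to i}(i)\\ \mathcal{W}_{i\to j}(j)&\mathcal{W}_{j\to i}(j)\end{bmatrix}$. *)

theory Defs
  imports "HOL-Analysis.Analysis"
begin

text \<open>Large matrices (of size nd x nd) are represented as real functions of two
indices of type 'v \<times> 'd (vertex, coordinate); operations are taken over an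
explicit (finite) index set I.  Blocks of size d x d are HOL-Analysis matrices
real^'d^'d.\<close>

type_synonym ('i) fmat = "'i \<Rightarrow> 'i \<Rightarrow> real"

definition fmmul :: "'i set \<Rightarrow> 'i fmat \<Rightarrow> 'i fmat \<Rightarrow> 'i fmat" where
  "fmmul I A B = (\<lambda>x y. \<Sum>k\<in>I. A x k * B k y)"

definition fmid :: "'i fmat" where
  "fmid = (\<lambda>x y. if x = y then 1 else 0)"

definition is_pinv_on :: "'i set \<Rightarrow> 'i fmat \<Rightarrow> 'i fmat \<Rightarrow> bool" where
  "is_pinv_on I A X \<longleftrightarrow>
     (\<forall>x\<in>I. \<forall>y\<in>I. fmmul I (fmmul I A X) A x y = A x y) \<and>
     (\<forall>x\<in>I. \<forall>y\<in>I. fmmul I (fmmul I X A) X x y = X x y) \<and>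
     (\<forall>x\<in>I. \<forall>y\<in>I. fmmul I A X x y = fmmul I A X y x) \<and>
     (\<forall>x\<in>I. \<forall>y\<in>I. fmmul I X A x y = fmmul I X A y x)"

definition pinv_on :: "'i set \<Rightarrow> 'i fmat \<Rightarrow> 'i fmat" where
  "pinv_on I A = (THE X. is_pinv_on I A X \<and> (\<forall>x y. x \<notin> I \<or> y \<notin> I \<longrightarrow> X x y = 0))"

text \<open>Schur complement M/M[T,T] = M[S,S] - M[S,T] M[T,T]^\<dagger> M[T,S]
 (meaningful for entries indexed by S, where S is the complement of T).\<close>
definition schur_on :: "'i set \<Rightarrow> 'i fmat \<Rightarrow> 'i fmat" where
  "schur_on T M = (\<lambda>x y. M x y - (\<Sum>k\<in>T. \<Sum>l\<in>T. M x k * pinv_on T M k l * M l y))"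

definition deg :: "('v::finite \<Rightarrow> 'v \<Rightarrow> real) \<Rightarrow> 'v \<Rightarrow> real" where
  "deg w x = (\<Sum>y\<in>UNIV. w x y)"

definition connection_graph ::
  "('v::finite \<Rightarrow> 'v \<Rightarrow> real) \<Rightarrow> ('v \<Rightarrow> 'v \<Rightarrow> real^'d::finite^'d) \<Rightarrow> bool" where
  "connection_graph w \<sigma> \<longleftrightarrow>
     (\<forall>x y. w x y \<ge> 0) \<and> (\<forall>x y. w x y = w y x) \<and> (\<forall>x. w x x = 0) \<and>
     (\<forall>x y. (x, y) \<in> {(a, b). w a b > 0}\<^sup>*) \<and>
     (\<forall>x y. w x y > 0 \<longrightarrow> orthogonal_matrix (\<sigma> x y)) \<and>
     (\<forall>x y. w x y > 0 \<longrightarrow> \<sigma> y x = transpose (\<sigma> x y))"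

definition conn_lap ::
  "('v::finite \<Rightarrow> 'v \<Rightarrow> real) \<Rightarrow> ('v \<Rightarrow> 'v \<Rightarrow> real^'d::finite^'d) \<Rightarrow> ('v \<times> 'd) fmat" where
  "conn_lap w \<sigma> = (\<lambda>(x, a) (y, b).
     if x = y then (if a = b then deg w x else 0)
     else - w x y * (\<sigma> x y $ a $ b))"

fun walk_weight ::
  "('v::finite \<Rightarrow> 'v \<Rightarrow> real) \<Rightarrow> ('v \<Rightarrow> 'v \<Rightarrow> real^'d::finite^'d) \<Rightarrow> 'v \<Rightarrow> 'v list \<Rightarrow> real^'d^'d" where
  "walk_weight w \<sigma> x [] = mat 1"
| "walk_weight w \<sigma> x (y # ys) = (w x y / deg w x) *\<^sub>R (\<sigma> x y ** walk_weight w \<sigma> y ys)"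

text \<open>Trajectories X_1..X_T of the walk started at X_0 = i with first hitting time of j equal to T.\<close>
definition hit_paths :: "'v \<Rightarrow> 'v \<Rightarrow> nat \<Rightarrow> 'v list set" where
  "hit_paths i j T = {xs. length xs = T \<and> (i # xs) ! T = j \<and> (\<forall>t<T. (i # xs) ! t \<noteq> j)}"

text \<open>Omega^0_{ij} = E[ prod_{l=1}^{T^0_j} sigma_{X_{l-1} X_l} | X_0 = i ], the expectation
 written out as the sum over all finite trajectories up to the hitting time.\<close>
definition Omega0 ::
  "('v::finite \<Rightarrow> 'v \<Rightarrow> real) \<Rightarrow> ('v \<Rightarrow> 'v \<Rightarrow> real^'d::finite^'d) \<Rightarrow> 'v \<Rightarrow> 'v \<Rightarrow> real^'d^'d" where
  "Omega0 w \<sigma> i j = (\<Sum>T. \<Sum>xs\<in>hit_paths i j T. walk_weight w \<sigma> i xs)"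

definition Ncol ::
  "('v::finite \<Rightarrow> 'v \<Rightarrow> real) \<Rightarrow> ('v \<Rightarrow> 'v \<Rightarrow> real^'d::finite^'d) \<Rightarrow> 'v \<Rightarrow> 'v \<Rightarrow> 'v \<Rightarrow> real^'d^'d" where
  "Ncol w \<sigma> i j x = (if x = i then mat 1 else if x = j then - transpose (Omega0 w \<sigma> i j) else 0)"

definition Wblk ::
  "('v::finite \<Rightarrow> 'v \<Rightarrow> real) \<Rightarrow> ('v \<Rightarrow> 'v \<Rightarrow> real^'d::finite^'d) \<Rightarrow> 'v \<Rightarrow> 'v \<Rightarrow> 'v \<Rightarrow> real^'d^'d" where
  "Wblk w \<sigma> i j x = (\<chi> a b. \<Sum>k\<in>UNIV.
      pinv_on UNIV (conn_lap w \<sigma>) (x, a) k * (Ncol w \<sigma> i j (fst k) $ snd k $ b))"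

text \<open>R^sigma(i,j) as a 2x2 block matrix ((top-left, top-right), (bottom-left, bottom-right)).\<close>
definition Rmat ::
  "('v::finite \<Rightarrow> 'v \<Rightarrow> real) \<Rightarrow> ('v \<Rightarrow> 'v \<Rightarrow> real^'d::finite^'d) \<Rightarrow> 'v \<Rightarrow> 'v \<Rightarrow>
     ((real^'d^'d) \<times> (real^'d^'d)) \<times> ((real^'d^'d) \<times> (real^'d^'d))" where
  "Rmat w \<sigma> i j = ((Wblk w \<sigma> i j i, Wblk w \<sigma> j i i), (Wblk w \<sigma> i j j, Wblk w \<sigma> j i j))"

text \<open>Conductance matrix C^sigma(i,j) = L / L_{{i,j}^c,{i,j}^c}; its block at (x,y) for x,y in {i,j}.\<close>
definition cond_blk ::
  "('v::finite \<Rightarrow> 'v \<Rightarrow> real) \<Rightarrow> ('v \<Rightarrow> 'v \<Rightarrow> real^'d::finite^'d) \<Rightarrow> 'v \<Rightarrow> 'v \<Rightarrow> 'v \<Rightarrow> 'v \<Rightarrow> real^'d^'d" where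
  "cond_blk w \<sigma> i j x y = (\<chi> a b. schur_on ((- {i, j}) \<times> UNIV) (conn_lap w \<sigma>) (x, a) (y, b))"

end

(*
  The quadratic form of the connection Laplacian is
  1/2 \<Sum> w(x,y) |v(x) - \<sigma>(x,y) v(y)|^2, so L is positive semidefinite; being invertible,
  it is definite, and every principal submatrix is invertible (its pseudoinverse is its
  inverse). Let S = V - {j} and let u be the column of L[S,S]^-1 at the i-block, extended
  by zero at j. First-step analysis of the walk shows that x \<mapsto> \<Omega>0(x,j) is L-harmonic
  off j and equals I at j; the series defining it converges because the \<sigma>(x,y) are
  isometries, so its terms are dominated by hitting probabilities. Pairing this harmonic
  function with L u through the symmetry of L identifies the j-block of L u as
  -\<Omega>0(i,j)^T, i.e. L u = N(i,j). Hence W(i->j) = u vanishes at j, and its i-block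
  inverts the Schur complement of L[S,S] with respect to V - {i,j}, which is C(i,i).
  Exchanging i and j gives the other column of R(i,j).
*)
theory Submission
  imports Defs
begin

section \<open>Matrices indexed by finite sets\<close>

lemma fmmul_assoc: "finite I \<Longrightarrow> fmmul I (fmmul I A B) C = fmmul I A (fmmul I B C)"
  unfolding fmmul_def
  by (auto simp: sum_distrib_left sum_distrib_right mult.assoc intro!: ext sum.swap[THEN trans])

definition eq_on :: "'i set \<Rightarrow> 'i fmat \<Rightarrow> 'i fmat \<Rightarrow> bool" where
  "eq_on I A B \<longleftrightarrow> (\<forall>x\<in>I. \<forall>y\<in>I. A x y = B x y)"

lemma eq_on_refl: "eq_on I A A"
  by (simp add: eq_on_def)

lemma eq_on_sym: "eq_on I A B \<Longrightarrow> eq_on I B A"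
  by (simp add: eq_on_def)

lemma eq_on_trans [trans]: "eq_on I A B \<Longrightarrow> eq_on I B C \<Longrightarrow> eq_on I A C"
  by (simp add: eq_on_def)

lemma eq_on_fmmul: "eq_on I A A' \<Longrightarrow> eq_on I B B' \<Longrightarrow> eq_on I (fmmul I A B) (fmmul I A' B')"
  unfolding eq_on_def fmmul_def by (auto intro!: sum.cong)

lemma eq_on_fmmul_fmid_left: "finite I \<Longrightarrow> eq_on I (fmmul I fmid B) B"
  unfolding eq_on_def fmmul_def fmid_def
  by (auto simp: if_distrib[of "\<lambda>t. t * _"] sum.delta cong: if_cong)

lemma eq_on_fmmul_fmid_right: "finite I \<Longrightarrow> eq_on I (fmmul I B fmid) B"
  unfolding eq_on_def fmmul_def fmid_def
  by (auto simp: if_distrib[of "\<lambda>t. _ * t"] sum.delta' cong: if_cong)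

definition is_inverse_on :: "'i set \<Rightarrow> 'i fmat \<Rightarrow> 'i fmat \<Rightarrow> bool" where
  "is_inverse_on I A X \<longleftrightarrow>
     eq_on I (fmmul I A X) fmid \<and> eq_on I (fmmul I X A) fmid \<and>
     (\<forall>x y. x \<notin> I \<or> y \<notin> I \<longrightarrow> X x y = 0)"

lemma pinv_on_eqI:
  assumes fin: "finite I" and inv: "is_inverse_on I A X"
  shows "pinv_on I A = X"
  unfolding pinv_on_def
proof (rule the_equality)
  have AX: "eq_on I (fmmul I A X) fmid" and XA: "eq_on I (fmmul I X A) fmid"
    and out: "\<forall>x y. x \<notin> I \<or> y \<notin> I \<longrightarrow> X x y = 0"
    using inv by (auto simp: is_inverse_on_def)
  have "eq_on I (fmmul I (fmmul I A X) A) A"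
    using eq_on_trans[OF eq_on_fmmul[OF AX eq_on_refl] eq_on_fmmul_fmid_left[OF fin]] .
  moreover have "eq_on I (fmmul I (fmmul I X A) X) X"
    using eq_on_trans[OF eq_on_fmmul[OF XA eq_on_refl] eq_on_fmmul_fmid_left[OF fin]] .
  ultimately show "is_pinv_on I A X \<and> (\<forall>x y. x \<notin> I \<or> y \<notin> I \<longrightarrow> X x y = 0)"
    using AX XA out unfolding is_pinv_on_def eq_on_def fmid_def by auto
  fix Y assume Y: "is_pinv_on I A Y \<and> (\<forall>x y. x \<notin> I \<or> y \<notin> I \<longrightarrow> Y x y = 0)"
  then have AYA: "eq_on I (fmmul I (fmmul I A Y) A) A"
    unfolding is_pinv_on_def eq_on_def by auto
  \<comment> \<open>\<open>Y = (X A) Y (A X) = X (A Y A) X = X A X = X\<close> on \<open>I \<times> I\<close>\<close>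
  have "eq_on I Y (fmmul I fmid (fmmul I Y fmid))"
    by (meson eq_on_fmmul_fmid_left eq_on_fmmul_fmid_right eq_on_fmmul eq_on_refl eq_on_sym
        eq_on_trans fin)
  also have "eq_on I \<dots> (fmmul I (fmmul I X A) (fmmul I Y (fmmul I A X)))"
    by (intro eq_on_fmmul eq_on_sym[OF XA] eq_on_sym[OF AX] eq_on_refl)
  also have "fmmul I (fmmul I X A) (fmmul I Y (fmmul I A X)) =
      fmmul I X (fmmul I (fmmul I (fmmul I A Y) A) X)"
    by (simp add: fmmul_assoc fin)
  also have "eq_on I \<dots> (fmmul I X (fmmul I A X))"
    by (intro eq_on_fmmul eq_on_refl AYA)
  also have "eq_on I \<dots> (fmmul I X fmid)"
    by (intro eq_on_fmmul eq_on_refl AX)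
  also have "eq_on I \<dots> X"
    by (rule eq_on_fmmul_fmid_right[OF fin])
  finally show "Y = X"
    using Y out unfolding eq_on_def by (intro ext) metis
qed

lemma sum_fmmul_cancel_left:
  fixes A X :: "'i::finite fmat"
  assumes "fmmul UNIV X A = fmid"
  shows "(\<Sum>k\<in>UNIV. X p k * (\<Sum>q\<in>UNIV. A k q * u q)) = u p"
proof -
  have "(\<Sum>k\<in>UNIV. X p k * (\<Sum>q\<in>UNIV. A k q * u q)) = (\<Sum>q\<in>UNIV. fmmul UNIV X A p q * u q)"
    unfolding fmmul_def by (simp add: sum_distrib_left sum_distrib_right mult.assoc) (rule sum.swap)
  also have "\<dots> = u p"
    by (simp add: assms fmid_def if_distrib[of "\<lambda>t. t * _"] cong: if_cong)
  finally show ?thesis .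
qed

lemma sum_UNIV_prod: "(\<Sum>q\<in>UNIV. f q) = (\<Sum>x\<in>UNIV. \<Sum>a\<in>UNIV. f (x, a))"
  for f :: "'a::finite \<times> 'b::finite \<Rightarrow> 'c::comm_monoid_add"
  by (simp add: sum.cartesian_product)

lemma sum_singleton_Times: "(\<Sum>q\<in>{x} \<times> B. g q) = (\<Sum>b\<in>B. g (x, b))"
  by (rule sum.reindex_bij_witness[of _ "Pair x" snd]) auto

lemma sum_UNIV_split_disjoint:
  fixes g :: "'i::finite \<Rightarrow> 'a::comm_monoid_add"
  assumes "R \<inter> T = {}" "\<And>q. q \<notin> R \<union> T \<Longrightarrow> g q = 0"
  shows "(\<Sum>q\<in>UNIV. g q) = (\<Sum>q\<in>R. g q) + (\<Sum>q\<in>T. g q)"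
  using assms by (simp add: sum.mono_neutral_right[of UNIV "R \<union> T"] sum.union_disjoint)

text \<open>Padding \<open>A[I,I]\<close> with an identity block gives a matrix whose kernel vectors are
  isotropic for \<open>A\<close>.\<close>
lemma definite_imp_ex_inverse_on:
  fixes A :: "'i::finite fmat"
  assumes definite: "\<And>v. (\<Sum>p\<in>UNIV. \<Sum>q\<in>UNIV. v p * A p q * v q) = 0 \<Longrightarrow> v = (\<lambda>_. 0)"
  shows "\<exists>X. is_inverse_on I A X"
proof -
  define B :: "real^'i^'i"
    where "B = (\<chi> p q. if p \<in> I \<and> q \<in> I then A p q else if p = q then 1 else 0)"
  have "z = 0" if z: "B *v z = 0" for z
  proof -
    have rows: "(\<Sum>q\<in>UNIV. B $ p $ q * z $ q) = 0" for p
      using z by (simp add: matrix_vector_mult_def vec_eq_iff)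
    have off: "z $ p = 0" if "p \<notin> I" for p
      using rows[of p] that by (simp add: B_def if_distrib[of "\<lambda>t. t * _"] cong: if_cong)
    have on: "(\<Sum>q\<in>UNIV. A p q * z $ q) = 0" if "p \<in> I" for p
    proof -
      have "(\<Sum>q\<in>UNIV. A p q * z $ q) = (\<Sum>q\<in>UNIV. B $ p $ q * z $ q)"
        using that off by (intro sum.cong) (auto simp: B_def)
      then show ?thesis using rows[of p] by simp
    qed
    have "(\<Sum>p\<in>UNIV. \<Sum>q\<in>UNIV. z $ p * A p q * z $ q) = (\<Sum>p\<in>UNIV. z $ p * (\<Sum>q\<in>UNIV. A p q * z $ q))"
      by (simp add: sum_distrib_left mult.assoc)
    also have "\<dots> = 0"
      by (rule sum.neutral) (metis on off mult_eq_0_iff)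
    finally have "(\<lambda>p. z $ p) = (\<lambda>_. 0)" by (rule definite)
    then show "z = 0" by (simp add: vec_eq_iff fun_eq_iff)
  qed
  then obtain C where CB: "C ** B = mat 1"
    using matrix_left_invertible_ker by blast
  then have BC: "B ** C = mat 1"
    using matrix_left_right_inverse by blast
  define X where "X = (\<lambda>p q. if p \<in> I \<and> q \<in> I then C $ p $ q else 0)"
  have restrict: "fmmul I F G p q = (\<Sum>k\<in>UNIV. F' k * G' k)"
    if "\<And>k. k \<in> I \<Longrightarrow> F p k * G k q = F' k * G' k" "\<And>k. k \<notin> I \<Longrightarrow> F' k * G' k = 0"
    for F G :: "'i fmat" and F' G' :: "'i \<Rightarrow> real" and p q
    unfolding fmmul_def using that by (subst sum.mono_neutral_right[of UNIV I]) auto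
  have "fmmul I A X p q = (B ** C) $ p $ q" "fmmul I X A p q = (C ** B) $ p $ q"
    if "p \<in> I" "q \<in> I" for p q
    unfolding matrix_matrix_mult_def using that
    by (auto intro!: restrict simp: B_def X_def)
  then show ?thesis
    using BC CB by (intro exI[of _ X]) (auto simp: is_inverse_on_def eq_on_def X_def mat_def fmid_def)
qed

text \<open>Solving the \<open>T\<close>-rows of \<open>A u\<close> gives \<open>u|\<^sub>T = - A[T,T]\<^sup>-\<^sup>1 A[T,R] u|\<^sub>R\<close>; substituting this
  into any other row produces the Schur complement.\<close>
lemma schur_on_mult:
  fixes A :: "'i::finite fmat"
  assumes left_inv: "eq_on T (fmmul T (pinv_on T A) A) fmid"
    and disj: "R \<inter> T = {}"
    and supp: "\<And>q. q \<notin> R \<union> T \<Longrightarrow> u q = 0"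
    and vanish: "\<And>l. l \<in> T \<Longrightarrow> (\<Sum>q\<in>UNIV. A l q * u q) = 0"
  shows "(\<Sum>r\<in>R. schur_on T A p r * u r) = (\<Sum>q\<in>UNIV. A p q * u q)"
proof -
  define X where "X = pinv_on T A"
  have split: "(\<Sum>q\<in>UNIV. A l q * u q) = (\<Sum>r\<in>R. A l r * u r) + (\<Sum>k\<in>T. A l k * u k)" for l
    using disj supp by (intro sum_UNIV_split_disjoint) auto
  have solve: "u k = - (\<Sum>l\<in>T. X k l * (\<Sum>r\<in>R. A l r * u r))" if "k \<in> T" for k
  proof -
    have "u k = (\<Sum>m\<in>T. fmid k m * u m)"
      using that by (simp add: fmid_def if_distrib[of "\<lambda>t. t * _"] cong: if_cong)
    also have "\<dots> = (\<Sum>m\<in>T. fmmul T X A k m * u m)"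
      using left_inv that unfolding eq_on_def X_def by (intro sum.cong) auto
    also have "\<dots> = (\<Sum>l\<in>T. X k l * (\<Sum>m\<in>T. A l m * u m))"
      unfolding fmmul_def by (simp add: sum_distrib_left sum_distrib_right mult.assoc) (rule sum.swap)
    also have "\<dots> = (\<Sum>l\<in>T. X k l * - (\<Sum>r\<in>R. A l r * u r))"
      using split vanish by (intro sum.cong) (auto simp: add_eq_0_iff)
    finally show ?thesis by (simp add: sum_negf)
  qed
  have "(\<Sum>r\<in>R. \<Sum>k\<in>T. \<Sum>l\<in>T. A p k * X k l * A l r * u r) =
      (\<Sum>k\<in>T. A p k * (\<Sum>l\<in>T. X k l * (\<Sum>r\<in>R. A l r * u r)))"
  proof -
    have "(\<Sum>r\<in>R. \<Sum>k\<in>T. \<Sum>l\<in>T. A p k * X k l * A l r * u r) =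
        (\<Sum>k\<in>T. \<Sum>l\<in>T. \<Sum>r\<in>R. A p k * X k l * A l r * u r)"
      by (subst sum.swap) (simp add: sum.swap[of _ R])
    then show ?thesis
      by (simp add: sum_distrib_left mult.assoc)
  qed
  also have "\<dots> = - (\<Sum>k\<in>T. A p k * u k)"
    by (simp add: solve sum_negf)
  finally show ?thesis
    by (simp add: schur_on_def split[of p] X_def[symmetric] left_diff_distrib sum_subtractf
        sum_distrib_right)
qed

lemma symmetric_reciprocity:
  fixes A :: "'i::finite fmat"
  assumes sym: "\<And>p q. A p q = A q p"
    and supp: "\<And>p. p \<notin> S \<Longrightarrow> u p = 0"
    and vanish: "\<And>p. p \<in> S \<Longrightarrow> (\<Sum>q\<in>UNIV. A p q * f q) = 0"
  shows "(\<Sum>q\<in>UNIV. f q * (\<Sum>p\<in>UNIV. A q p * u p)) = 0"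
proof -
  have "(\<Sum>q\<in>UNIV. f q * (\<Sum>p\<in>UNIV. A q p * u p)) = (\<Sum>p\<in>UNIV. u p * (\<Sum>q\<in>UNIV. A p q * f q))"
    unfolding sum_distrib_left by (subst sum.swap) (simp add: sym mult_ac)
  also have "\<dots> = 0"
    by (rule sum.neutral) (metis supp vanish mult_eq_0_iff)
  finally show ?thesis .
qed

lemma matrix_inv_eqI:
  fixes A :: "real^'n::finite^'n"
  assumes AB: "A ** B = mat 1"
  shows "matrix_inv A = B"
proof -
  have "A ** matrix_inv A = mat 1 \<and> matrix_inv A ** A = mat 1"
    unfolding matrix_inv_def
    by (rule someI[of _ B]) (use AB matrix_left_right_inverse in blast)
  then have "matrix_inv A = matrix_inv A ** (A ** B)"
    by (simp add: AB)
  also have "\<dots> = B"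
    by (simp add: matrix_mul_assoc \<open>A ** matrix_inv A = mat 1 \<and> matrix_inv A ** A = mat 1\<close>)
  finally show ?thesis .
qed

lemma power2_norm_matrix: "norm (A :: real^'n::finite^'m::finite)^2 = (\<Sum>a\<in>UNIV. norm (A $ a)^2)"
  by (simp add: power2_norm_eq_inner inner_vec_def)

lemma norm_transpose: "norm (transpose A) = norm (A :: real^'n::finite^'m::finite)"
proof -
  have "norm (transpose A)^2 = norm A^2"
    by (simp add: power2_norm_eq_inner inner_vec_def transpose_def) (rule sum.swap)
  then show ?thesis
    by (simp add: power2_eq_iff_nonneg)
qed

lemma norm_orthogonal_matrix_mult_vector:
  fixes Q :: "real^'n::finite^'n"
  assumes "orthogonal_matrix Q"
  shows "norm (Q *v v) = norm v"
  using assms orthogonal_transformation_matrix[of "(*v) Q"]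
  by (simp add: orthogonal_transformation_norm)

lemma norm_orthogonal_matrix_mult:
  fixes Q :: "real^'n::finite^'n"
  assumes "orthogonal_matrix Q"
  shows "norm (Q ** A) = norm A"
proof -
  have "transpose (Q ** A) $ b = Q *v (transpose A $ b)" for b
    by (simp add: vec_eq_iff transpose_def matrix_matrix_mult_def matrix_vector_mult_def)
  then have "norm (transpose (Q ** A))^2 = norm (transpose A)^2"
    by (simp add: power2_norm_matrix norm_orthogonal_matrix_mult_vector[OF assms])
  then show ?thesis
    by (simp add: norm_transpose power2_eq_iff_nonneg)
qed

lemma bounded_linear_matrix_mult_left:
  "bounded_linear (\<lambda>A. Q ** (A :: real^'p::finite^'n::finite))"
proof -
  have "linear (\<lambda>A. Q ** (A :: real^'p^'n))"
    by (rule linearI)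
      (simp_all add: matrix_matrix_mult_def vec_eq_iff sum_distrib_left distrib_left sum.distrib
        mult_ac)
  then show ?thesis
    by (simp add: linear_conv_bounded_linear)
qed

section \<open>Connection graphs\<close>

definition vertex_vec :: "('v \<times> 'd::finite \<Rightarrow> real) \<Rightarrow> 'v \<Rightarrow> real^'d" where
  "vertex_vec g x = (\<chi> a. g (x, a))"

lemma finite_hit_paths: "finite (hit_paths (i :: 'v::finite) j T)"
  by (rule finite_subset[OF _ finite_lists_length_eq[of UNIV T]]) (auto simp: hit_paths_def)

lemma hit_paths_0: "hit_paths i j 0 = (if i = j then {[]} else {})"
  by (auto simp: hit_paths_def)

lemma hit_paths_Suc:
  "hit_paths i j (Suc T) =
    (if i = j then {} else (\<lambda>(y, ys). y # ys) ` (SIGMA y:UNIV. hit_paths y j T))"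
  by (auto simp: hit_paths_def All_less_Suc2 length_Suc_conv image_iff)

locale conn_graph =
  fixes w :: "'v::finite \<Rightarrow> 'v \<Rightarrow> real" and \<sigma> :: "'v \<Rightarrow> 'v \<Rightarrow> real^'d::finite^'d"
  assumes connection_graph: "connection_graph w \<sigma>"
begin

lemma w_nonneg: "w x y \<ge> 0"
  and w_sym: "w x y = w y x"
  and w_self: "w x x = 0"
  and connected: "(x, y) \<in> {(a, b). w a b > 0}\<^sup>*"
  and orthogonal_matrix_\<sigma>: "w x y > 0 \<Longrightarrow> orthogonal_matrix (\<sigma> x y)"
  and \<sigma>_swap: "w x y > 0 \<Longrightarrow> \<sigma> y x = transpose (\<sigma> x y)"
  using connection_graph unfolding connection_graph_def by blast+

lemma deg_pos:
  assumes "x \<noteq> j"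
  shows "deg w x > 0"
proof -
  from connected[of x j] assms obtain y where "w x y > 0"
    by (cases rule: converse_rtranclE) auto
  moreover have "w x y \<le> deg w x"
    unfolding deg_def by (rule member_le_sum) (auto simp: w_nonneg)
  ultimately show ?thesis by simp
qed

abbreviation L :: "('v \<times> 'd) fmat" where
  "L \<equiv> conn_lap w \<sigma>"

lemma conn_lap_sym: "L p q = L q p"
proof -
  obtain x a y b where pq: "p = (x, a)" "q = (y, b)"
    by fastforce
  show ?thesis
  proof (cases "w x y > 0")
    case True
    then show ?thesis
      using \<sigma>_swap[OF True] by (auto simp: pq conn_lap_def w_sym[of x y] transpose_def)
  next
    case False
    then show ?thesis
      using w_nonneg[of x y] by (auto simp: pq conn_lap_def w_sym[of x y])
  qed
qed

lemma conn_lap_mult: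
  "(\<Sum>q\<in>UNIV. L (x, a) q * g q) =
    (deg w x *\<^sub>R vertex_vec g x - (\<Sum>y\<in>UNIV. w x y *\<^sub>R (\<sigma> x y *v vertex_vec g y))) $ a"
proof -
  have entry: "L (x, a) q = (if q = (x, a) then deg w x else 0) - w x (fst q) * \<sigma> x (fst q) $ a $ snd q"
    for q by (cases q) (auto simp: conn_lap_def w_self)
  have "(\<Sum>q\<in>UNIV. L (x, a) q * g q) =
      deg w x * g (x, a) - (\<Sum>y\<in>UNIV. \<Sum>b\<in>UNIV. w x y * (\<sigma> x y $ a $ b * g (y, b)))"
    by (simp add: entry left_diff_distrib sum_subtractf if_distrib[of "\<lambda>t. t * _"] mult.assoc
        cong: if_cong) (simp add: sum_UNIV_prod)
  also have "\<dots> = (deg w x *\<^sub>R vertex_vec g x - (\<Sum>y\<in>UNIV. w x y *\<^sub>R (\<sigma> x y *v vertex_vec g y))) $ a"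
    by (simp add: vertex_vec_def matrix_vector_mult_def sum_distrib_left)
  finally show ?thesis .
qed

lemma conn_lap_quadratic_form:
  "(\<Sum>p\<in>UNIV. \<Sum>q\<in>UNIV. v p * L p q * v q) =
    (1/2) * (\<Sum>x\<in>UNIV. \<Sum>y\<in>UNIV. w x y * (norm (vertex_vec v x - \<sigma> x y *v vertex_vec v y))^2)"
proof -
  define V where "V = vertex_vec v"
  have "(\<Sum>p\<in>UNIV. \<Sum>q\<in>UNIV. v p * L p q * v q) =
      (\<Sum>x\<in>UNIV. \<Sum>a\<in>UNIV. V x $ a * (\<Sum>q\<in>UNIV. L (x, a) q * v q))"
    by (subst sum_UNIV_prod) (simp add: sum_distrib_left mult.assoc V_def vertex_vec_def)
  also have "\<dots> = (\<Sum>x\<in>UNIV. V x \<bullet> (deg w x *\<^sub>R V x - (\<Sum>y\<in>UNIV. w x y *\<^sub>R (\<sigma> x y *v V y))))"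
    by (simp add: conn_lap_mult inner_vec_def V_def)
  also have "\<dots> = (\<Sum>x\<in>UNIV. deg w x * (V x \<bullet> V x) - (\<Sum>y\<in>UNIV. w x y * (V x \<bullet> (\<sigma> x y *v V y))))"
    by (simp add: inner_diff_right inner_sum_right)
  finally have lhs: "(\<Sum>p\<in>UNIV. \<Sum>q\<in>UNIV. v p * L p q * v q) = \<dots>" .
  have edge: "w x y * (norm (V x - \<sigma> x y *v V y))^2 =
      w x y * (V x \<bullet> V x) + w x y * (V y \<bullet> V y) - 2 * (w x y * (V x \<bullet> (\<sigma> x y *v V y)))" for x y
  proof (cases "w x y > 0")
    case True
    have "(\<sigma> x y *v V y) \<bullet> (\<sigma> x y *v V y) = V y \<bullet> V y"
      using norm_orthogonal_matrix_mult_vector[OF orthogonal_matrix_\<sigma>[OF True]]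
      by (metis power2_norm_eq_inner)
    then show ?thesis
      by (simp add: power2_norm_eq_inner inner_diff_left inner_diff_right inner_commute algebra_simps)
  next
    case False
    then show ?thesis
      using w_nonneg[of x y] by simp
  qed
  have deg_sum: "(\<Sum>y\<in>UNIV. w x y) = deg w x" for x
    by (simp add: deg_def)
  have swap: "(\<Sum>x\<in>UNIV. \<Sum>y\<in>UNIV. w x y * (V y \<bullet> V y)) = (\<Sum>y\<in>UNIV. deg w y * (V y \<bullet> V y))"
    by (subst sum.swap) (simp add: w_sym deg_def sum_distrib_right)
  have "(\<Sum>x\<in>UNIV. \<Sum>y\<in>UNIV. w x y * (norm (V x - \<sigma> x y *v V y))^2) =
      2 * (\<Sum>x\<in>UNIV. deg w x * (V x \<bullet> V x)) - 2 * (\<Sum>x\<in>UNIV. \<Sum>y\<in>UNIV. w x y * (V x \<bullet> (\<sigma> x y *v V y)))"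
    by (simp add: edge sum.distrib sum_subtractf sum_distrib_left[symmetric] sum_distrib_right[symmetric]
        deg_sum swap)
  then show ?thesis
    unfolding lhs by (simp add: sum_subtractf V_def)
qed

subsection \<open>The random walk and \<open>\<Omega>\<^sup>0\<close>\<close>

definition walk_prob :: "'v \<Rightarrow> 'v \<Rightarrow> real" where
  "walk_prob x y = w x y / deg w x"

lemma walk_prob_nonneg: "walk_prob x y \<ge> 0"
  by (simp add: walk_prob_def w_nonneg deg_def sum_nonneg)

lemma sum_walk_prob: "x \<noteq> j \<Longrightarrow> (\<Sum>y\<in>UNIV. walk_prob x y) = 1"
  using deg_pos[of x j] by (simp add: walk_prob_def deg_def sum_divide_distrib[symmetric])

definition hit_weight :: "'v \<Rightarrow> nat \<Rightarrow> 'v \<Rightarrow> real^'d^'d" where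
  "hit_weight j T x = (\<Sum>xs\<in>hit_paths x j T. walk_weight w \<sigma> x xs)"

lemma Omega0_eq_suminf_hit_weight: "Omega0 w \<sigma> x j = (\<Sum>T. hit_weight j T x)"
  by (simp add: Omega0_def hit_weight_def)

lemma hit_weight_0: "hit_weight j 0 x = (if x = j then mat 1 else 0)"
  by (simp add: hit_weight_def hit_paths_0)

lemma hit_weight_Suc:
  "hit_weight j (Suc T) x =
    (if x = j then 0 else (\<Sum>y\<in>UNIV. walk_prob x y *\<^sub>R (\<sigma> x y ** hit_weight j T y)))"
proof (cases "x = j")
  case False
  have inj: "inj_on (\<lambda>(y, ys). y # ys) (SIGMA y:UNIV. hit_paths y j T)"
    by (auto simp: inj_on_def)
  have "hit_weight j (Suc T) x = (\<Sum>(y, ys)\<in>(SIGMA y:UNIV. hit_paths y j T). walk_weight w \<sigma> x (y # ys))"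
    unfolding hit_weight_def hit_paths_Suc if_not_P[OF False]
    by (subst sum.reindex[OF inj]) (simp add: case_prod_unfold)
  also have "\<dots> = (\<Sum>y\<in>UNIV. \<Sum>ys\<in>hit_paths y j T. walk_weight w \<sigma> x (y # ys))"
    by (simp add: sum.Sigma finite_hit_paths)
  also have "\<dots> = (\<Sum>y\<in>UNIV. walk_prob x y *\<^sub>R (\<sigma> x y ** hit_weight j T y))"
    by (simp add: hit_weight_def walk_prob_def scaleR_sum_right
        linear_sum[OF bounded_linear.linear[OF bounded_linear_matrix_mult_left]])
  finally show ?thesis
    using False by simp
qed (simp add: hit_weight_def hit_paths_Suc)

fun hit_prob :: "'v \<Rightarrow> nat \<Rightarrow> 'v \<Rightarrow> real" where
  "hit_prob j 0 x = (if x = j then 1 else 0)"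
| "hit_prob j (Suc T) x = (if x = j then 0 else (\<Sum>y\<in>UNIV. walk_prob x y * hit_prob j T y))"

lemma hit_prob_nonneg: "hit_prob j T x \<ge> 0"
  by (induction T arbitrary: x) (auto intro!: sum_nonneg mult_nonneg_nonneg walk_prob_nonneg)

lemma sum_hit_prob_le_1: "(\<Sum>T<N. hit_prob j T x) \<le> 1"
proof (induction N arbitrary: x)
  case (Suc N)
  have shift: "(\<Sum>T<Suc N. hit_prob j T x) = hit_prob j 0 x + (\<Sum>T<N. hit_prob j (Suc T) x)"
    by (rule sum.lessThan_Suc_shift)
  show ?case
  proof (cases "x = j")
    case False
    have "(\<Sum>T<Suc N. hit_prob j T x) = (\<Sum>y\<in>UNIV. walk_prob x y * (\<Sum>T<N. hit_prob j T y))"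
      using False unfolding shift by (simp add: sum_distrib_left) (rule sum.swap)
    also have "\<dots> \<le> (\<Sum>y\<in>UNIV. walk_prob x y * 1)"
      by (intro sum_mono mult_left_mono Suc.IH walk_prob_nonneg)
    finally show ?thesis
      using sum_walk_prob[OF False] by simp
  qed (unfold shift, simp)
qed simp

text \<open>The \<open>\<sigma> x y\<close> are isometries for the Frobenius norm, so the trajectories hitting \<open>j\<close> at
  time \<open>T\<close> weigh at most \<open>norm (mat 1)\<close> times their probability.\<close>
lemma norm_hit_weight_le: "norm (hit_weight j T x) \<le> norm (mat 1 :: real^'d^'d) * hit_prob j T x"
proof (induction T arbitrary: x)
  case (Suc T)
  have step: "walk_prob x y * norm (\<sigma> x y ** A) = walk_prob x y * norm A" for y A
    using orthogonal_matrix_\<sigma>[of x y] w_nonneg[of x y]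
    by (cases "w x y > 0") (simp_all add: norm_orthogonal_matrix_mult walk_prob_def)
  have "norm (\<Sum>y\<in>UNIV. walk_prob x y *\<^sub>R (\<sigma> x y ** hit_weight j T y))
      \<le> (\<Sum>y\<in>UNIV. norm (walk_prob x y *\<^sub>R (\<sigma> x y ** hit_weight j T y)))"
    by (rule norm_sum)
  also have "\<dots> = (\<Sum>y\<in>UNIV. walk_prob x y * norm (hit_weight j T y))"
    by (simp add: walk_prob_nonneg step)
  also have "\<dots> \<le> (\<Sum>y\<in>UNIV. walk_prob x y * (norm (mat 1 :: real^'d^'d) * hit_prob j T y))"
    by (intro sum_mono mult_left_mono Suc.IH walk_prob_nonneg)
  finally show ?case
    by (simp add: hit_weight_Suc sum_distrib_left mult_ac)
qed (simp add: hit_weight_0)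

lemma summable_hit_weight: "summable (\<lambda>T. hit_weight j T x)"
proof (rule summable_comparison_test)
  show "\<exists>N. \<forall>T\<ge>N. norm (hit_weight j T x) \<le> norm (mat 1 :: real^'d^'d) * hit_prob j T x"
    using norm_hit_weight_le by blast
  show "summable (\<lambda>T. norm (mat 1 :: real^'d^'d) * hit_prob j T x)"
    by (intro summable_mult summableI_nonneg_bounded[where x=1] hit_prob_nonneg sum_hit_prob_le_1)
qed

lemma Omega0_self: "Omega0 w \<sigma> j j = mat 1"
proof -
  have "hit_weight j T j = (if T = 0 then mat 1 else 0)" for T
    by (cases T) (simp_all add: hit_weight_0 hit_weight_Suc)
  moreover have "(\<lambda>T. if T = 0 then mat 1 else 0) sums (mat 1 :: real^'d^'d)"
    using sums_single[of 0 "\<lambda>_. mat 1 :: real^'d^'d"] by simp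
  ultimately show ?thesis
    by (simp add: Omega0_eq_suminf_hit_weight sums_iff)
qed

lemma Omega0_step:
  assumes "x \<noteq> j"
  shows "Omega0 w \<sigma> x j = (\<Sum>y\<in>UNIV. walk_prob x y *\<^sub>R (\<sigma> x y ** Omega0 w \<sigma> y j))"
proof -
  have bl: "bounded_linear (\<lambda>A. walk_prob x y *\<^sub>R (\<sigma> x y ** A))" for y
    by (rule bounded_linear_compose[OF bounded_linear_scaleR_right bounded_linear_matrix_mult_left])
  have "Omega0 w \<sigma> x j = (\<Sum>T. hit_weight j (Suc T) x)"
    using suminf_split_head[OF summable_hit_weight[of j x]] assms
    by (simp add: Omega0_eq_suminf_hit_weight hit_weight_0)
  also have "\<dots> = (\<Sum>y\<in>UNIV. \<Sum>T. walk_prob x y *\<^sub>R (\<sigma> x y ** hit_weight j T y))"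
    using assms by (simp add: hit_weight_Suc suminf_sum bounded_linear.summable[OF bl summable_hit_weight])
  also have "\<dots> = (\<Sum>y\<in>UNIV. walk_prob x y *\<^sub>R (\<sigma> x y ** Omega0 w \<sigma> y j))"
    by (simp add: Omega0_eq_suminf_hit_weight bounded_linear.suminf[OF bl summable_hit_weight])
  finally show ?thesis .
qed

lemma conn_lap_Omega0:
  assumes "x \<noteq> j"
  shows "(\<Sum>q\<in>UNIV. L (x, a) q * Omega0 w \<sigma> (fst q) j $ snd q $ b) = 0"
proof -
  have col: "vertex_vec (\<lambda>q. Omega0 w \<sigma> (fst q) j $ snd q $ b) y = column b (Omega0 w \<sigma> y j)" for y
    by (simp add: vertex_vec_def column_def)
  have "deg w x *\<^sub>R Omega0 w \<sigma> x j = (\<Sum>y\<in>UNIV. w x y *\<^sub>R (\<sigma> x y ** Omega0 w \<sigma> y j))"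
    using deg_pos[OF assms] by (subst Omega0_step[OF assms]) (simp add: scaleR_sum_right walk_prob_def)
  then show ?thesis
    by (simp add: conn_lap_mult col column_def vec_eq_iff matrix_vector_mult_def
        matrix_matrix_mult_def sum_distrib_left mult_ac)
qed

end

section \<open>Absolutely inconsistent connection graphs\<close>

locale absolutely_inconsistent_conn_graph =
  conn_graph w \<sigma> for w :: "'v::finite \<Rightarrow> 'v \<Rightarrow> real" and \<sigma> :: "'v \<Rightarrow> 'v \<Rightarrow> real^'d::finite^'d" +
  assumes conn_lap_invertible:
    "\<exists>M. fmmul UNIV (conn_lap w \<sigma>) M = fmid \<and> fmmul UNIV M (conn_lap w \<sigma>) = fmid"
begin

lemma pinv_conn_lap_left_inverse: "fmmul UNIV (pinv_on UNIV L) L = fmid"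
proof -
  obtain M where "fmmul UNIV L M = fmid" "fmmul UNIV M L = fmid"
    using conn_lap_invertible by blast
  moreover from this have "pinv_on UNIV L = M"
    by (intro pinv_on_eqI) (simp_all add: is_inverse_on_def eq_on_def)
  ultimately show ?thesis
    by simp
qed

text \<open>Isotropy forces every edge term of the quadratic form to vanish, which puts \<open>v\<close> in the
  kernel of \<open>L\<close>.\<close>
lemma conn_lap_definite:
  assumes "(\<Sum>p\<in>UNIV. \<Sum>q\<in>UNIV. v p * L p q * v q) = 0"
  shows "v = (\<lambda>_. 0)"
proof -
  define V where "V = vertex_vec v"
  define t where "t x y = w x y * (norm (V x - \<sigma> x y *v V y))^2" for x y
  have t_nonneg: "t x y \<ge> 0" for x y
    by (simp add: t_def w_nonneg)
  have "(\<Sum>x\<in>UNIV. \<Sum>y\<in>UNIV. t x y) = 0"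
    using assms by (simp add: conn_lap_quadratic_form t_def V_def)
  then have "\<forall>x\<in>UNIV. \<forall>y\<in>UNIV. t x y = 0"
    by (simp add: sum_nonneg_eq_0_iff sum_nonneg t_nonneg)
  then have edge: "w x y *\<^sub>R (V x - \<sigma> x y *v V y) = 0" for x y
    by (simp add: t_def)
  have "(\<Sum>q\<in>UNIV. L p q * v q) = 0" for p
  proof -
    obtain x a where p: "p = (x, a)"
      by fastforce
    have "deg w x *\<^sub>R V x - (\<Sum>y\<in>UNIV. w x y *\<^sub>R (\<sigma> x y *v V y)) =
        (\<Sum>y\<in>UNIV. w x y *\<^sub>R (V x - \<sigma> x y *v V y))"
      by (simp add: deg_def scaleR_sum_left scaleR_diff_right sum_subtractf)
    then show ?thesis
      by (simp add: p conn_lap_mult V_def[symmetric] edge)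
  qed
  then show ?thesis
    using sum_fmmul_cancel_left[OF pinv_conn_lap_left_inverse, of _ v] by auto
qed

lemma is_inverse_on_pinv_on: "is_inverse_on S L (pinv_on S L)"
proof -
  obtain X where "is_inverse_on S L X"
    using definite_imp_ex_inverse_on conn_lap_definite by blast
  then show ?thesis
    by (simp add: pinv_on_eqI)
qed

text \<open>Rows off \<open>j\<close> hold by construction; the rows at \<open>j\<close> follow by pairing
  \<open>L u\<close> with the \<open>L\<close>-harmonic function \<open>x \<mapsto> \<Omega>\<^sup>0\<^sub>x\<^sub>j\<close>, which equals \<open>I\<close> at \<open>j\<close>.\<close>
lemma conn_lap_pinv_on_column:
  assumes "i \<noteq> j"
  shows "(\<Sum>q\<in>UNIV. L p q * pinv_on ((- {j}) \<times> UNIV) L q (i, b)) = Ncol w \<sigma> i j (fst p) $ snd p $ b"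
proof -
  define S where "S = (- {j}) \<times> (UNIV :: 'd set)"
  define u where "u q = pinv_on S L q (i, b)" for q
  have inv: "is_inverse_on S L (pinv_on S L)"
    by (rule is_inverse_on_pinv_on)
  have supp: "u q = 0" if "q \<notin> S" for q
    using inv that unfolding is_inverse_on_def u_def by blast
  have on_S: "(\<Sum>q\<in>UNIV. L p q * u q) = fmid p (i, b)" if "p \<in> S" for p
  proof -
    have "(\<Sum>q\<in>UNIV. L p q * u q) = fmmul S L (pinv_on S L) p (i, b)"
      unfolding fmmul_def u_def using supp[unfolded u_def] by (intro sum.mono_neutral_right) auto
    also have "\<dots> = fmid p (i, b)"
      using inv that assms by (auto simp: is_inverse_on_def eq_on_def S_def)
    finally show ?thesis .
  qed
  have at_j: "(\<Sum>q\<in>UNIV. L (j, a) q * u q) = - Omega0 w \<sigma> i j $ b $ a" for a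
  proof -
    define f where "f q = Omega0 w \<sigma> (fst q) j $ snd q $ a" for q
    have harmonic: "(\<Sum>q\<in>UNIV. L p q * f q) = 0" if "p \<in> S" for p
      using that by (cases p) (simp add: S_def f_def conn_lap_Omega0)
    have "0 = (\<Sum>q\<in>UNIV. f q * (\<Sum>p\<in>UNIV. L q p * u p))"
      by (rule symmetric_reciprocity[symmetric, OF conn_lap_sym supp harmonic])
    also have "\<dots> = (\<Sum>q\<in>{j} \<times> UNIV. f q * (\<Sum>p\<in>UNIV. L q p * u p)) + (\<Sum>q\<in>S. f q * fmid q (i, b))"
      by (subst sum_UNIV_split_disjoint[of _ S]) (auto simp: S_def on_S)
    also have "\<dots> = (\<Sum>q\<in>UNIV. L (j, a) q * u q) + Omega0 w \<sigma> i j $ b $ a"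
      using assms
      by (simp add: sum_singleton_Times f_def Omega0_self mat_def S_def fmid_def
          if_distrib[of "\<lambda>t. t * _"] if_distrib[of "\<lambda>t. _ * t"] cong: if_cong)
    finally show ?thesis
      by linarith
  qed
  obtain x c where p: "p = (x, c)"
    by fastforce
  show ?thesis
  proof (cases "x = j")
    case True
    then show ?thesis
      using at_j[of c] assms by (simp add: p u_def S_def Ncol_def transpose_def)
  next
    case False
    then show ?thesis
      using on_S[of p] by (auto simp: p u_def S_def Ncol_def fmid_def mat_def)
  qed
qed

lemma Wblk_eq_pinv_on:
  assumes "i \<noteq> j"
  shows "Wblk w \<sigma> i j x $ a $ b = pinv_on ((- {j}) \<times> UNIV) L (x, a) (i, b)"
  by (simp add: Wblk_def conn_lap_pinv_on_column[OF assms, symmetric]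
      sum_fmmul_cancel_left[OF pinv_conn_lap_left_inverse])

lemma Wblk_target:
  assumes "i \<noteq> j"
  shows "Wblk w \<sigma> i j j = 0"
  using is_inverse_on_pinv_on[of "(- {j}) \<times> UNIV"]
  by (simp add: vec_eq_iff Wblk_eq_pinv_on[OF assms] is_inverse_on_def)

lemma Wblk_source:
  assumes "i \<noteq> j"
  shows "Wblk w \<sigma> i j i = matrix_inv (cond_blk w \<sigma> i j i i)"
proof (rule matrix_inv_eqI[symmetric])
  define T where "T = (- {i, j}) \<times> (UNIV :: 'd set)"
  define u where "u b q = pinv_on ((- {j}) \<times> UNIV) L q (i, b)" for b q
  have Lu: "(\<Sum>q\<in>UNIV. L p q * u b q) = Ncol w \<sigma> i j (fst p) $ snd p $ b" for p b
    unfolding u_def by (rule conn_lap_pinv_on_column[OF assms])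
  have "(\<Sum>c\<in>UNIV. schur_on T L (i, a) (i, c) * u b (i, c)) = (\<Sum>q\<in>UNIV. L (i, a) q * u b q)" for a b
    unfolding sum_singleton_Times[of "\<lambda>r. schur_on T L (i, a) r * u b r", symmetric]
  proof (rule schur_on_mult)
    show "eq_on T (fmmul T (pinv_on T L) L) fmid"
      using is_inverse_on_pinv_on[of T] by (simp add: is_inverse_on_def)
    show "q \<notin> {i} \<times> UNIV \<union> T \<Longrightarrow> u b q = 0" for q
      using is_inverse_on_pinv_on[of "(- {j}) \<times> UNIV"]
      unfolding T_def u_def is_inverse_on_def by (cases q) blast
    show "l \<in> T \<Longrightarrow> (\<Sum>q\<in>UNIV. L l q * u b q) = 0" for l
      by (auto simp: Lu T_def Ncol_def)
  qed (auto simp: T_def)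
  then show "cond_blk w \<sigma> i j i i ** Wblk w \<sigma> i j i = mat 1"
    using assms
    by (simp add: vec_eq_iff matrix_matrix_mult_def cond_blk_def T_def[symmetric] Wblk_eq_pinv_on
        u_def[symmetric] Lu Ncol_def)
qed

end

theorem proposition6p6:
  fixes w :: "'v::finite \<Rightarrow> 'v \<Rightarrow> real"
    and \<sigma> :: "'v \<Rightarrow> 'v \<Rightarrow> real^'d::finite^'d"
    and i j :: 'v
  assumes "connection_graph w \<sigma>"
    and "\<exists>M. fmmul UNIV (conn_lap w \<sigma>) M = fmid \<and> fmmul UNIV M (conn_lap w \<sigma>) = fmid"
    and "i \<noteq> j"
  shows "Rmat w \<sigma> i j =
    ((matrix_inv (cond_blk w \<sigma> i j i i), 0), (0, matrix_inv (cond_blk w \<sigma> i j j j)))"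
proof -
  interpret absolutely_inconsistent_conn_graph w \<sigma>
    using assms(1,2) by unfold_locales
  have "cond_blk w \<sigma> j i j j = cond_blk w \<sigma> i j j j"
    by (simp add: cond_blk_def insert_commute)
  with assms(3) show ?thesis
    by (simp add: Rmat_def Wblk_source Wblk_target)
qed

end
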